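(* Let $n\ge 1$, $s\in\{1,\dots,n\}$, let $C\in\mathbb{R}^{n\times n}$ be symmetric positive definite, and let $z^*=\max\{\log\det(C_{S,S}) : S\subseteq\{1,\dots,n\},\ |S|=s\}$. Then for every $t$ with $0\le t\le\lambda_{\min}(C)$, $$z^*=\max\Big\{\widehat{\Phi}_s\big(M_t(x);t\big) : x\in\{0,1\}^n,\ \textstyle\sum_{i=1}^n x_i=s\Big\}.$$
   Context: $\log$ is natural, $C_{S,S}$ is the principal submatrix of $C$ indexed by $S$, and $\lambda_{\min}(C)$ is the smallest eigenvalue of $C$. For $0\le t\le\lambda_{\min}(C)$ let $A(t)\in\mathbb{R}^{n\times n}$ be a Cholesky factor of $C-tI$ (so $C-tI=A(t)^\top A(t)$), with $i$-th column $a_i(t)$, and for $x\in[0,1]^n$ put $M_t(x)=\sum_i x_i a_i(t)a_i(t)^\top$. For a positive semidefinite $X$ with eigenvalues $\lambda_1(X)\ge\dots\ge\lambda_n(X)$, let $\Phi_s(X;t)=\sum_{i=1}^s\log(\lambda_i(X)+t)$. $\widehat{\Phi}_s(\cdot\,;t)$ is the concave envelope of $\Phi_s(\cdot\,;t)$ on the cone of $n\times n$ positive semidefinite matrices, i.e. the pointwise infimum of all concave functions there that are $\ge\Phi_s(\cdot\,;t)$. *)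

theory Defs
  imports "Jordan_Normal_Form.Spectral_Radius" "Jordan_Normal_Form.DL_Submatrix"
    "HOL-Library.Extended_Real"
begin

definition eigs_desc :: "real mat \<Rightarrow> real list" where
  "eigs_desc X = rev (sorted_list_of_multiset (proots (char_poly X)))"

(* lambda_i(X), 1-based *)
definition eig :: "real mat \<Rightarrow> nat \<Rightarrow> real" where
  "eig X i = eigs_desc X ! (i - 1)"

definition lambda_min :: "real mat \<Rightarrow> real" where
  "lambda_min C = Min (spectrum C)"

definition sym_mat :: "real mat \<Rightarrow> bool" where
  "sym_mat X \<longleftrightarrow> transpose_mat X = X"

definition pos_def :: "nat \<Rightarrow> real mat \<Rightarrow> bool" where
  "pos_def n C \<longleftrightarrow> C \<in> carrier_mat n n \<and> sym_mat C \<and>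
     (\<forall>v \<in> carrier_vec n. v \<noteq> 0\<^sub>v n \<longrightarrow> 0 < v \<bullet> (C *\<^sub>v v))"

definition psd_cone :: "nat \<Rightarrow> real mat set" where
  "psd_cone n = {X \<in> carrier_mat n n. sym_mat X \<and> (\<forall>v \<in> carrier_vec n. 0 \<le> v \<bullet> (X *\<^sub>v v))}"

definition Phi :: "nat \<Rightarrow> real \<Rightarrow> real mat \<Rightarrow> ereal" where
  "Phi s t X = (if (\<forall>i\<in>{1..s}. 0 < eig X i + t)
                then ereal (\<Sum>i=1..s. ln (eig X i + t)) else -\<infinity>)"

(* concavity on the PSD cone (hypograph convexity, for extended-real valued g) *)
definition concave_on_psd :: "nat \<Rightarrow> (real mat \<Rightarrow> ereal) \<Rightarrow> bool" where
  "concave_on_psd n g \<longleftrightarrow>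
     (\<forall>X \<in> psd_cone n. \<forall>Y \<in> psd_cone n. \<forall>\<theta>::real. \<forall>a b::real.
        0 \<le> \<theta> \<longrightarrow> \<theta> \<le> 1 \<longrightarrow> ereal a \<le> g X \<longrightarrow> ereal b \<le> g Y \<longrightarrow>
        ereal (\<theta> * a + (1 - \<theta>) * b) \<le> g (\<theta> \<cdot>\<^sub>m X + (1 - \<theta>) \<cdot>\<^sub>m Y))"

definition Phi_hat :: "nat \<Rightarrow> nat \<Rightarrow> real \<Rightarrow> real mat \<Rightarrow> ereal" where
  "Phi_hat n s t X = Inf {g X | g. concave_on_psd n g \<and> (\<forall>Y \<in> psd_cone n. Phi s t Y \<le> g Y)}"

definition cholesky_factor :: "nat \<Rightarrow> real mat \<Rightarrow> real \<Rightarrow> real mat \<Rightarrow> bool" where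
  "cholesky_factor n C t A \<longleftrightarrow> A \<in> carrier_mat n n \<and> upper_triangular A \<and>
     (\<forall>i<n. 0 \<le> A $$ (i, i)) \<and> transpose_mat A * A = C - t \<cdot>\<^sub>m 1\<^sub>m n"

(* M_t(x) = sum_i x_i a_i a_i^T, a_i the i-th column of A *)
definition M_mat :: "nat \<Rightarrow> real mat \<Rightarrow> real vec \<Rightarrow> real mat" where
  "M_mat n A x = mat n n (\<lambda>(j, k). \<Sum>i<n. x $ i * (A $$ (j, i) * A $$ (k, i)))"

end

theory Submission
  imports Defs
begin

text \<open>For a binary \<open>x\<close> with support \<open>S\<close>, \<open>M\<^sub>t(x) = B B\<^sup>T\<close> where the columns of \<open>B\<close> are the
  \<open>a\<^sub>i(t)\<close>, \<open>i \<in> S\<close>, and \<open>B\<^sup>T B + t I = C\<^sub>S\<^sub>,\<^sub>S\<close> by the Cholesky identity. The nonzero eigenvalues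
  of \<open>B B\<^sup>T\<close> are those of \<open>B\<^sup>T B\<close>, so \<open>\<Phi>\<^sub>s(B B\<^sup>T; t) = log det C\<^sub>S\<^sub>,\<^sub>S\<close>, a lower bound for the
  envelope. Conversely, for every \<open>\<tau> > t\<close> the function \<open>Y \<mapsto> log det (Y + \<tau> I) - (n - s) log \<tau>\<close>
  is concave on the PSD cone (tangent-plane inequality \<open>log det Q \<le> log det P + tr (P\<^sup>-\<^sup>1 Q) - n\<close>,
  from \<open>log r \<le> r - 1\<close> for the positive eigenvalues \<open>r\<close> of \<open>P\<^sup>-\<^sup>1 Q\<close>) and majorizes \<open>\<Phi>\<^sub>s(\<cdot>; t)\<close>;
  by Sylvester's determinant identity its value at \<open>B B\<^sup>T\<close> is \<open>log det (B\<^sup>T B + \<tau> I)\<close>. Letting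
  \<open>\<tau> \<down> t\<close> shows that the envelope equals \<open>log det C\<^sub>S\<^sub>,\<^sub>S\<close> at \<open>M\<^sub>t(x)\<close>, so both maxima range over
  the same values.\<close>

section \<open>Real spectra of symmetric pencils\<close>

lemma scalar_prod_mult_mat_vec_sum:
  fixes X :: "'a :: comm_semiring_0 mat"
  assumes "X \<in> carrier_mat n n" "v \<in> carrier_vec n" "w \<in> carrier_vec n"
  shows "v \<bullet> (X *\<^sub>v w) = (\<Sum>i<n. \<Sum>j<n. v $ i * X $$ (i, j) * w $ j)"
  using assms
  by (auto simp: scalar_prod_def mult_mat_vec_def sum_distrib_left atLeast0LessThan mult.assoc
      intro!: sum.cong)

lemma scalar_prod_self_pos:
  fixes v :: "real vec"
  assumes "v \<in> carrier_vec n" "v \<noteq> 0\<^sub>v n"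
  shows "0 < v \<bullet> v"
proof -
  have "0 < v \<bullet>c v" using conjugate_square_greater_0_vec[OF assms(1)] assms(2) by blast
  then show ?thesis by (simp only: vec_conjugate_real)
qed

lemma pos_def_nonneg:
  assumes "pos_def n P" and "v \<in> carrier_vec n"
  shows "0 \<le> v \<bullet> (P *\<^sub>v v)"
  using assms unfolding pos_def_def by (cases "v = 0\<^sub>v n") (auto intro: less_imp_le)

lemma pos_def_one: "pos_def n (1\<^sub>m n :: real mat)"
  using scalar_prod_self_pos by (auto simp: pos_def_def sym_mat_def)

lemma cnj_quadratic_form_of_real:
  fixes X :: "real mat" and v :: "complex vec"
  assumes X: "X \<in> carrier_mat n n" "sym_mat X" and v: "v \<in> carrier_vec n"
  defines "a \<equiv> map_vec Re v" and "b \<equiv> map_vec Im v"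
  shows "conjugate v \<bullet> (map_mat complex_of_real X *\<^sub>v v) = of_real (a \<bullet> (X *\<^sub>v a) + b \<bullet> (X *\<^sub>v b))"
proof -
  have X_sym: "X $$ (j, i) = X $$ (i, j)" if "i < n" "j < n" for i j
    using X that unfolding sym_mat_def by (metis carrier_matD index_transpose_mat(1))
  have cross: "(\<Sum>i<n. \<Sum>j<n. Re (v$i) * X $$ (i, j) * Im (v$j))
             = (\<Sum>i<n. \<Sum>j<n. Im (v$i) * X $$ (i, j) * Re (v$j))"
    by (subst sum.swap) (auto simp: X_sym mult_ac intro!: sum.cong)
  have "conjugate v \<bullet> (map_mat complex_of_real X *\<^sub>v v)
      = (\<Sum>i<n. \<Sum>j<n. cnj (v$i) * of_real (X $$ (i, j)) * v$j)"
    using X v by (subst scalar_prod_mult_mat_vec_sum[of _ n]) auto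
  also have "\<dots> = of_real (\<Sum>i<n. \<Sum>j<n. Re (v$i) * X $$ (i, j) * Re (v$j) + Im (v$i) * X $$ (i, j) * Im (v$j))"
    using cross by (intro complex_eqI) (simp_all add: algebra_simps sum_subtractf)
  also have "\<dots> = of_real (a \<bullet> (X *\<^sub>v a) + b \<bullet> (X *\<^sub>v b))"
    using X v by (simp add: a_def b_def scalar_prod_mult_mat_vec_sum[of _ n] sum.distrib)
  finally show ?thesis .
qed

lemma map_vec_Re_Im_nonzero:
  fixes v :: "complex vec"
  assumes v: "v \<in> carrier_vec n" "v \<noteq> 0\<^sub>v n"
  shows "map_vec Re v \<noteq> 0\<^sub>v n \<or> map_vec Im v \<noteq> 0\<^sub>v n"
proof (rule ccontr)
  assume "\<not> (map_vec Re v \<noteq> 0\<^sub>v n \<or> map_vec Im v \<noteq> 0\<^sub>v n)"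
  then have "Re (v $ i) = 0 \<and> Im (v $ i) = 0" if "i < n" for i
    using that v by (metis index_map_vec(1) index_zero_vec(1) carrier_vecD)
  then have "v = 0\<^sub>v n" using v by (intro eq_vecI) (auto simp: complex_eq_iff)
  with v show False by simp
qed

lemma char_poly_real_roots_split:
  fixes Z :: "real mat"
  assumes Z: "Z \<in> carrier_mat n n"
    and real: "\<And>l. eigenvalue (map_mat complex_of_real Z) l \<Longrightarrow> Im l = 0"
  shows "\<exists>rs. length rs = n \<and> char_poly Z = (\<Prod>r\<leftarrow>rs. [:-r, 1:])"
proof -
  interpret h: map_poly_inj_comm_ring_hom complex_of_real ..
  have Zc: "map_mat complex_of_real Z \<in> carrier_mat n n" using Z by simp
  obtain zs where cp: "char_poly (map_mat complex_of_real Z) = (\<Prod>z\<leftarrow>zs. [:-z, 1:])" and len: "length zs = n"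
    using char_poly_factorized[OF Zc] by blast
  have "z = of_real (Re z)" if "z \<in> set zs" for z
  proof -
    have "eigenvalue (map_mat complex_of_real Z) z"
      using that Zc by (simp add: eigenvalue_root_char_poly[of _ n] cp linear_poly_root)
    then show ?thesis using real complex_eqI by fastforce
  qed
  then have zs: "zs = map of_real (map Re zs)" by (simp add: map_idI)
  have "map_poly complex_of_real (char_poly Z) = char_poly (map_mat complex_of_real Z)"
    by (rule of_real_hom.char_poly_hom[OF Z, symmetric])
  also have "\<dots> = map_poly complex_of_real (\<Prod>r\<leftarrow>map Re zs. [:-r, 1:])"
    unfolding cp by (subst zs) (simp add: h.hom_prod_list o_def)
  finally have "char_poly Z = (\<Prod>r\<leftarrow>map Re zs. [:-r, 1:])" by simp
  then show ?thesis using len by (intro exI[of _ "map Re zs"]) simp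
qed

lemma eigenvector_inverse_mult:
  fixes P G Q :: "'a :: field mat"
  assumes P: "P \<in> carrier_mat n n" and G: "G \<in> carrier_mat n n" and Q: "Q \<in> carrier_mat n n"
    and PG: "P * G = 1\<^sub>m n" and v: "v \<in> carrier_vec n" and ev: "(G * Q) *\<^sub>v v = l \<cdot>\<^sub>v v"
  shows "Q *\<^sub>v v = l \<cdot>\<^sub>v (P *\<^sub>v v)"
proof -
  have Q_eq: "Q = P * (G * Q)"
    using P G Q by (simp add: assoc_mult_mat[symmetric, of _ n n _ n _ n] PG)
  show ?thesis
    using P G Q v ev by (subst Q_eq) (simp add: assoc_mult_mat_vec[of _ n n _ n] mult_mat_vec[of _ n n])
qed

lemma pencil_complex_eigenvalue_real:
  fixes P Q G :: "real mat"
  assumes P: "pos_def n P" and Q: "Q \<in> carrier_mat n n" "sym_mat Q"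
    and G: "G \<in> carrier_mat n n" and PG: "P * G = 1\<^sub>m n"
    and l: "eigenvalue (map_mat complex_of_real (G * Q)) l"
  shows "Im l = 0"
proof -
  have Pc: "P \<in> carrier_mat n n" and P_sym: "sym_mat P" using P unfolding pos_def_def by auto
  have GQ: "G * Q \<in> carrier_mat n n" using G Q by simp
  obtain v where v: "v \<in> carrier_vec n" "v \<noteq> 0\<^sub>v n"
    and ev: "map_mat complex_of_real (G * Q) *\<^sub>v v = l \<cdot>\<^sub>v v"
    using l GQ unfolding eigenvalue_def eigenvector_def by auto
  define a where "a = map_vec Re v"
  define b where "b = map_vec Im v"
  define qQ where "qQ = a \<bullet> (Q *\<^sub>v a) + b \<bullet> (Q *\<^sub>v b)"
  define qP where "qP = a \<bullet> (P *\<^sub>v a) + b \<bullet> (P *\<^sub>v b)"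
  have "map_mat complex_of_real P * map_mat complex_of_real G = map_mat complex_of_real (P * G)"
    by (rule of_real_hom.mat_hom_mult[OF Pc G, symmetric])
  then have "map_mat complex_of_real P * map_mat complex_of_real G = 1\<^sub>m n"
    by (simp add: PG of_real_hom.mat_hom_one)
  moreover have "(map_mat complex_of_real G * map_mat complex_of_real Q) *\<^sub>v v = l \<cdot>\<^sub>v v"
    unfolding of_real_hom.mat_hom_mult[OF G Q(1), symmetric] by (rule ev)
  ultimately have "map_mat complex_of_real Q *\<^sub>v v = l \<cdot>\<^sub>v (map_mat complex_of_real P *\<^sub>v v)"
    using Pc G Q v by (intro eigenvector_inverse_mult[of _ n]) auto
  then have "conjugate v \<bullet> (map_mat complex_of_real Q *\<^sub>v v)
      = l * (conjugate v \<bullet> (map_mat complex_of_real P *\<^sub>v v))"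
    using Pc v by simp
  then have eq: "of_real qQ = l * of_real qP"
    using Q Pc P_sym v by (simp add: cnj_quadratic_form_of_real a_def b_def qQ_def qP_def)
  have "a \<noteq> 0\<^sub>v n \<or> b \<noteq> 0\<^sub>v n" using map_vec_Re_Im_nonzero[OF v] by (simp add: a_def b_def)
  moreover have "a \<in> carrier_vec n" "b \<in> carrier_vec n" using v by (auto simp: a_def b_def)
  ultimately have "0 < qP"
    using P pos_def_nonneg[OF P] unfolding pos_def_def qP_def by (meson add_nonneg_pos add_pos_nonneg)
  with eq have "l = of_real (qQ / qP)" by simp
  then show ?thesis by simp
qed

lemma pencil_eigenvalues_real:
  fixes P Q G :: "real mat"
  assumes P: "pos_def n P" and Q: "Q \<in> carrier_mat n n" "sym_mat Q"
    and G: "G \<in> carrier_mat n n" and PG: "P * G = 1\<^sub>m n"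
  shows "\<exists>rs. length rs = n \<and> char_poly (G * Q) = (\<Prod>r\<leftarrow>rs. [:-r, 1:]) \<and>
    (\<forall>r\<in>set rs. \<exists>v\<in>carrier_vec n. v \<noteq> 0\<^sub>v n \<and> v \<bullet> (Q *\<^sub>v v) = r * (v \<bullet> (P *\<^sub>v v)))"
proof -
  have Pc: "P \<in> carrier_mat n n" using P unfolding pos_def_def by auto
  have GQ: "G * Q \<in> carrier_mat n n" using G Q by simp
  obtain rs where rs: "length rs = n" "char_poly (G * Q) = (\<Prod>r\<leftarrow>rs. [:-r, 1:])"
    using char_poly_real_roots_split[OF GQ] pencil_complex_eigenvalue_real[OF assms] by blast
  have "\<exists>v\<in>carrier_vec n. v \<noteq> 0\<^sub>v n \<and> v \<bullet> (Q *\<^sub>v v) = r * (v \<bullet> (P *\<^sub>v v))" if "r \<in> set rs" for r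
  proof -
    have "eigenvalue (G * Q) r"
      using that GQ by (simp add: eigenvalue_root_char_poly[of _ n] rs linear_poly_root)
    then obtain v where v: "v \<in> carrier_vec n" "v \<noteq> 0\<^sub>v n" and ev: "(G * Q) *\<^sub>v v = r \<cdot>\<^sub>v v"
      using GQ unfolding eigenvalue_def eigenvector_def by auto
    have "Q *\<^sub>v v = r \<cdot>\<^sub>v (P *\<^sub>v v)"
      by (rule eigenvector_inverse_mult[OF Pc G Q(1) PG v(1) ev])
    then have "v \<bullet> (Q *\<^sub>v v) = r * (v \<bullet> (P *\<^sub>v v))"
      using Pc v by simp
    with v show ?thesis by blast
  qed
  with rs show ?thesis by blast
qed

lemma sym_mat_eigenvalues:
  fixes X :: "real mat"
  assumes "X \<in> carrier_mat n n" "sym_mat X"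
  shows "\<exists>rs. length rs = n \<and> char_poly X = (\<Prod>r\<leftarrow>rs. [:-r, 1:]) \<and>
    (\<forall>r\<in>set rs. \<exists>v\<in>carrier_vec n. v \<noteq> 0\<^sub>v n \<and> v \<bullet> (X *\<^sub>v v) = r * (v \<bullet> v))"
  using pencil_eigenvalues_real[OF pos_def_one assms one_carrier_mat] assms by simp

lemma psd_cone_eigenvalues_nonneg:
  assumes "X \<in> psd_cone n"
  shows "\<exists>rs. length rs = n \<and> char_poly X = (\<Prod>r\<leftarrow>rs. [:-r, 1:]) \<and> (\<forall>r\<in>set rs. 0 \<le> r)"
proof -
  have X: "X \<in> carrier_mat n n" "sym_mat X" and nonneg: "\<forall>v \<in> carrier_vec n. 0 \<le> v \<bullet> (X *\<^sub>v v)"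
    using assms unfolding psd_cone_def by auto
  obtain rs where rs: "length rs = n" "char_poly X = (\<Prod>r\<leftarrow>rs. [:-r, 1:])"
    and ev: "\<forall>r\<in>set rs. \<exists>v\<in>carrier_vec n. v \<noteq> 0\<^sub>v n \<and> v \<bullet> (X *\<^sub>v v) = r * (v \<bullet> v)"
    using sym_mat_eigenvalues[OF X] by blast
  have "0 \<le> r" if r: "r \<in> set rs" for r
  proof -
    obtain v where v: "v \<in> carrier_vec n" "v \<noteq> 0\<^sub>v n" and eq: "v \<bullet> (X *\<^sub>v v) = r * (v \<bullet> v)"
      using ev r by blast
    have "0 \<le> r * (v \<bullet> v)" using nonneg v(1) unfolding eq[symmetric] by blast
    with scalar_prod_self_pos[OF v] show ?thesis by (simp add: zero_le_mult_iff)
  qed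
  with rs show ?thesis by blast
qed

section \<open>Determinant, trace and characteristic polynomial\<close>

lemma poly_char_poly_eq_det:
  fixes A :: "'a :: field mat"
  assumes A: "A \<in> carrier_mat n n"
  shows "poly (char_poly A) k = det (k \<cdot>\<^sub>m 1\<^sub>m n - A)"
proof -
  have "- char_matrix A k = k \<cdot>\<^sub>m 1\<^sub>m n - A"
    using A unfolding char_matrix_def by (intro eq_matI) auto
  then show ?thesis using char_poly_matrix[OF A] by simp
qed

lemma det_add_smult_one_eq_poly:
  fixes A :: "'a :: field mat"
  assumes A: "A \<in> carrier_mat n n"
  shows "det (A + \<tau> \<cdot>\<^sub>m 1\<^sub>m n) = (-1) ^ n * poly (char_poly A) (-\<tau>)"
proof -
  have "(-\<tau>) \<cdot>\<^sub>m 1\<^sub>m n - A = (-1) \<cdot>\<^sub>m (A + \<tau> \<cdot>\<^sub>m 1\<^sub>m n)"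
    using A by (intro eq_matI) auto
  then show ?thesis
    using A by (simp add: poly_char_poly_eq_det[OF A])
qed

lemma det_add_smult_one_eq_prod:
  fixes A :: "'a :: field mat"
  assumes A: "A \<in> carrier_mat n n" and cp: "char_poly A = (\<Prod>r\<leftarrow>rs. [:-r, 1:])"
    and len: "length rs = n"
  shows "det (A + \<tau> \<cdot>\<^sub>m 1\<^sub>m n) = (\<Prod>r\<leftarrow>rs. r + \<tau>)"
proof -
  have "poly (char_poly A) (-\<tau>) = (\<Prod>r\<leftarrow>rs. - \<tau> - r)"
    unfolding cp by (induction rs) (simp_all add: algebra_simps)
  also have "\<dots> = (-1) ^ n * (\<Prod>r\<leftarrow>rs. r + \<tau>)"
    unfolding len[symmetric] by (induction rs) (simp_all add: algebra_simps)
  finally show ?thesis by (simp add: det_add_smult_one_eq_poly[OF A])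
qed

lemma det_eq_prod_list:
  fixes A :: "'a :: field mat"
  assumes "A \<in> carrier_mat n n" "char_poly A = (\<Prod>r\<leftarrow>rs. [:-r, 1:])" "length rs = n"
  shows "det A = prod_list rs"
proof -
  have "A + 0 \<cdot>\<^sub>m 1\<^sub>m n = A" using assms(1) by (intro eq_matI) auto
  then show ?thesis using det_add_smult_one_eq_prod[OF assms, of 0] by simp
qed

definition trace :: "'a :: comm_ring_1 mat \<Rightarrow> 'a" where
  "trace A = (\<Sum>i<dim_row A. A $$ (i, i))"

lemma trace_mult_comm:
  assumes A: "A \<in> carrier_mat n m" and B: "B \<in> carrier_mat m n"
  shows "trace (A * B) = trace (B * A)"
proof -
  have "trace (A * B) = (\<Sum>i<n. \<Sum>j<m. A $$ (i, j) * B $$ (j, i))"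
    using A B by (auto simp: trace_def scalar_prod_def atLeast0LessThan intro!: sum.cong)
  also have "\<dots> = (\<Sum>j<m. \<Sum>i<n. B $$ (j, i) * A $$ (i, j))"
    by (subst sum.swap) (simp add: mult.commute)
  also have "\<dots> = trace (B * A)"
    using A B by (auto simp: trace_def scalar_prod_def atLeast0LessThan intro!: sum.cong)
  finally show ?thesis .
qed

lemma trace_eq_sum:
  fixes A :: "'a :: conjugatable_ordered_field mat"
  assumes A: "A \<in> carrier_mat n n" and cp: "char_poly A = (\<Prod>r\<leftarrow>rs. [:-r, 1:])"
  shows "trace A = sum_list rs"
proof -
  obtain B P Q where "schur_decomposition A rs = (B, P, Q)" by (cases "schur_decomposition A rs")
  with schur_decomposition[OF A cp] have "similar_mat_wit A B P Q" and B: "diag_mat B = rs"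
    by auto
  then have Bc: "B \<in> carrier_mat n n" and Pc: "P \<in> carrier_mat n n" and Qc: "Q \<in> carrier_mat n n"
    and QP: "Q * P = 1\<^sub>m n" and A_eq: "A = P * B * Q"
    using A unfolding similar_mat_wit_def Let_def by auto
  have "trace A = trace (P * (B * Q))" using Pc Bc Qc by (simp add: A_eq assoc_mult_mat[of _ n n])
  also have "\<dots> = trace (B * Q * P)" using Pc Bc Qc by (intro trace_mult_comm[of _ n n]) auto
  also have "\<dots> = trace B" using Pc Bc Qc by (simp add: assoc_mult_mat[of _ n n] QP)
  also have "\<dots> = sum_list rs"
    using Bc by (simp add: B[symmetric] trace_def diag_mat_def sum_list_sum_nth atLeast0LessThan)
  finally show ?thesis .
qed

lemma trace_mult_lincomb:
  fixes G X Y :: "'a :: comm_ring_1 mat"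
  assumes "G \<in> carrier_mat n n" "X \<in> carrier_mat n n" "Y \<in> carrier_mat n n"
  shows "trace (G * (a \<cdot>\<^sub>m X + b \<cdot>\<^sub>m Y)) = a * trace (G * X) + b * trace (G * Y)"
  using assms
  by (simp add: trace_def scalar_prod_def sum.distrib sum_distrib_left algebra_simps)

lemma sylvester_block_factorization_left:
  fixes B D :: "'a :: comm_ring_1 mat"
  assumes B: "B \<in> carrier_mat n s" and D: "D \<in> carrier_mat s n"
  shows "four_block_mat (1\<^sub>m n) B (0\<^sub>m s n) (1\<^sub>m s)
       * four_block_mat (\<tau> \<cdot>\<^sub>m 1\<^sub>m n + B * D) (0\<^sub>m n s) ((-1) \<cdot>\<^sub>m D) (1\<^sub>m s)
     = four_block_mat (\<tau> \<cdot>\<^sub>m 1\<^sub>m n) B ((-1) \<cdot>\<^sub>m D) (1\<^sub>m s)"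
proof -
  have BD: "B * D \<in> carrier_mat n n" using B D by simp
  have "1\<^sub>m n * (\<tau> \<cdot>\<^sub>m 1\<^sub>m n + B * D) + B * ((-1) \<cdot>\<^sub>m D) = \<tau> \<cdot>\<^sub>m 1\<^sub>m n"
    using B D BD by (simp add: mult_smult_distrib) (intro eq_matI, auto)
  moreover have "0\<^sub>m s n * (\<tau> \<cdot>\<^sub>m 1\<^sub>m n + B * D) + 1\<^sub>m s * ((-1) \<cdot>\<^sub>m D) = (-1) \<cdot>\<^sub>m D"
    using B D BD by simp
  ultimately show ?thesis
    using B D by (subst mult_four_block_mat) auto
qed

lemma sylvester_block_factorization_right:
  fixes B D :: "'a :: field mat"
  assumes B: "B \<in> carrier_mat n s" and D: "D \<in> carrier_mat s n" and \<tau>: "\<tau> \<noteq> 0"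
  shows "four_block_mat (\<tau> \<cdot>\<^sub>m 1\<^sub>m n) (0\<^sub>m n s) ((-1) \<cdot>\<^sub>m D) (1\<^sub>m s + (1 / \<tau>) \<cdot>\<^sub>m (D * B))
       * four_block_mat (1\<^sub>m n) ((1 / \<tau>) \<cdot>\<^sub>m B) (0\<^sub>m s n) (1\<^sub>m s)
     = four_block_mat (\<tau> \<cdot>\<^sub>m 1\<^sub>m n) B ((-1) \<cdot>\<^sub>m D) (1\<^sub>m s)"
proof -
  have DB: "D * B \<in> carrier_mat s s" using B D by simp
  have "\<tau> \<cdot>\<^sub>m 1\<^sub>m n * ((1 / \<tau>) \<cdot>\<^sub>m B) + 0\<^sub>m n s * 1\<^sub>m s = B"
    using B \<tau> by (simp add: mult_smult_distrib mult_smult_assoc_mat) (intro eq_matI, auto)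
  moreover have "(-1) \<cdot>\<^sub>m D * ((1 / \<tau>) \<cdot>\<^sub>m B) + (1\<^sub>m s + (1 / \<tau>) \<cdot>\<^sub>m (D * B)) * 1\<^sub>m s = 1\<^sub>m s"
    using B D DB by (simp add: mult_smult_distrib mult_smult_assoc_mat) (intro eq_matI, auto)
  ultimately show ?thesis
    using B D DB by (subst mult_four_block_mat) auto
qed

lemma sylvester_det:
  fixes B D :: "'a :: field mat"
  assumes B: "B \<in> carrier_mat n s" and D: "D \<in> carrier_mat s n" and \<tau>: "\<tau> \<noteq> 0" and sn: "s \<le> n"
  shows "det (\<tau> \<cdot>\<^sub>m 1\<^sub>m n + B * D) = \<tau> ^ (n - s) * det (\<tau> \<cdot>\<^sub>m 1\<^sub>m s + D * B)"
proof -
  have DB: "D * B \<in> carrier_mat s s" using B D by simp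
  let ?X = "four_block_mat (\<tau> \<cdot>\<^sub>m 1\<^sub>m n) B ((-1) \<cdot>\<^sub>m D) (1\<^sub>m s)"
  let ?Y = "1\<^sub>m s + (1 / \<tau>) \<cdot>\<^sub>m (D * B)"
  have "det (\<tau> \<cdot>\<^sub>m 1\<^sub>m n + B * D) = det ?X"
    using B D
    by (simp add: sylvester_block_factorization_left[OF B D, symmetric] det_mult[of _ "n + s"]
        det_four_block_mat_lower_left_zero[where n = n and m = s]
        det_four_block_mat_upper_right_zero[where n = n and m = s])
  also have "\<dots> = \<tau> ^ n * det ?Y"
    using B D DB
    by (simp add: sylvester_block_factorization_right[OF B D \<tau>, symmetric] det_mult[of _ "n + s"]
        det_four_block_mat_lower_left_zero[where n = n and m = s]
        det_four_block_mat_upper_right_zero[where n = n and m = s])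
  also have "\<dots> = \<tau> ^ (n - s) * (\<tau> ^ s * det ?Y)"
    using sn by (simp add: power_add[symmetric])
  also have "\<tau> \<cdot>\<^sub>m 1\<^sub>m s + D * B = \<tau> \<cdot>\<^sub>m ?Y"
    using B D DB \<tau> by (intro eq_matI) (auto simp: field_simps)
  then have "\<tau> ^ s * det ?Y = det (\<tau> \<cdot>\<^sub>m 1\<^sub>m s + D * B)"
    using B D by simp
  finally show ?thesis .
qed

lemma char_poly_mult_swap:
  fixes B D :: "'a :: field_char_0 mat"
  assumes B: "B \<in> carrier_mat n s" and D: "D \<in> carrier_mat s n" and sn: "s \<le> n"
  shows "char_poly (B * D) = [:0, 1:] ^ (n - s) * char_poly (D * B)"
proof -
  let ?p = "char_poly (B * D)" and ?q = "[:0, 1:] ^ (n - s) * char_poly (D * B)"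
  have "poly ?p x = poly ?q x" if x: "x \<noteq> 0" for x
  proof -
    have "x \<cdot>\<^sub>m 1\<^sub>m n - B * D = x \<cdot>\<^sub>m 1\<^sub>m n + B * ((-1) \<cdot>\<^sub>m D)"
      using B D by (simp add: mult_smult_distrib[OF B D]) (intro eq_matI, auto)
    then have "poly ?p x = det (x \<cdot>\<^sub>m 1\<^sub>m n + B * ((-1) \<cdot>\<^sub>m D))"
      using B D by (simp add: poly_char_poly_eq_det[of _ n])
    also have "\<dots> = x ^ (n - s) * det (x \<cdot>\<^sub>m 1\<^sub>m s + ((-1) \<cdot>\<^sub>m D) * B)"
      using B D x sn by (intro sylvester_det) auto
    also have "x \<cdot>\<^sub>m 1\<^sub>m s + ((-1) \<cdot>\<^sub>m D) * B = x \<cdot>\<^sub>m 1\<^sub>m s - D * B"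
      using B D by (simp add: mult_smult_assoc_mat[OF D B]) (intro eq_matI, auto)
    finally show ?thesis using B D by (simp add: poly_char_poly_eq_det[of _ s])
  qed
  then have "UNIV - {0} \<subseteq> {x. poly (?p - ?q) x = 0}" by auto
  moreover have "infinite (UNIV - {0 :: 'a})" by (simp add: infinite_UNIV_char_0)
  ultimately have "infinite {x. poly (?p - ?q) x = 0}" using finite_subset by blast
  then show ?thesis by (metis poly_roots_finite right_minus_eq)
qed

lemma right_inverse_exists:
  fixes P :: "'a :: field mat"
  assumes P: "P \<in> carrier_mat n n" and "det P \<noteq> 0"
  obtains G where "G \<in> carrier_mat n n" "P * G = 1\<^sub>m n"
proof
  show "(1 / det P) \<cdot>\<^sub>m adj_mat P \<in> carrier_mat n n" using adj_mat(1)[OF P] by simp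
  have "P * ((1 / det P) \<cdot>\<^sub>m adj_mat P) = (1 / det P) \<cdot>\<^sub>m (P * adj_mat P)"
    using mult_smult_distrib[OF P adj_mat(1)[OF P]] .
  also have "\<dots> = 1\<^sub>m n" unfolding adj_mat(2)[OF P] using assms(2) by (intro eq_matI) auto
  finally show "P * ((1 / det P) \<cdot>\<^sub>m adj_mat P) = 1\<^sub>m n" .
qed

section \<open>Concavity of the shifted log-determinant\<close>

lemma prod_list_pos:
  fixes xs :: "'a :: linordered_semidom list"
  shows "\<forall>x\<in>set xs. 0 < x \<Longrightarrow> 0 < prod_list xs"
  by (induction xs) auto

lemma ln_prod_list:
  fixes f :: "'a \<Rightarrow> real"
  shows "(\<And>x. x \<in> set xs \<Longrightarrow> 0 < f x) \<Longrightarrow> ln (\<Prod>x\<leftarrow>xs. f x) = (\<Sum>x\<leftarrow>xs. ln (f x))"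
proof (induction xs)
  case (Cons a xs)
  have "0 < f a" "0 < (\<Prod>x\<leftarrow>xs. f x)" using Cons.prems by (auto intro!: prod_list_pos)
  then have "ln (\<Prod>x\<leftarrow>a # xs. f x) = ln (f a) + ln (\<Prod>x\<leftarrow>xs. f x)" by (simp add: ln_mult_pos)
  with Cons show ?case by simp
qed simp

lemma smult_mat_mult_mat_vec:
  fixes A :: "'a :: comm_semiring_0 mat"
  assumes "A \<in> carrier_mat nr n" "v \<in> carrier_vec n"
  shows "(k \<cdot>\<^sub>m A) *\<^sub>v v = k \<cdot>\<^sub>v (A *\<^sub>v v)"
  using assms by (intro eq_vecI) (auto simp: scalar_prod_def sum_distrib_left mult.assoc)

lemma psd_cone_add_smult_one_pos_def:
  assumes Y: "Y \<in> psd_cone n" and \<tau>: "0 < \<tau>"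
  shows "pos_def n (Y + \<tau> \<cdot>\<^sub>m 1\<^sub>m n)"
proof -
  have Yc: "Y \<in> carrier_mat n n" and Y_sym: "sym_mat Y"
    and nonneg: "\<forall>v\<in>carrier_vec n. 0 \<le> v \<bullet> (Y *\<^sub>v v)"
    using Y unfolding psd_cone_def by auto
  have "sym_mat (Y + \<tau> \<cdot>\<^sub>m 1\<^sub>m n)"
    using Yc Y_sym unfolding sym_mat_def by (intro eq_matI) (auto, metis carrier_matD index_transpose_mat(1))
  moreover have "0 < v \<bullet> ((Y + \<tau> \<cdot>\<^sub>m 1\<^sub>m n) *\<^sub>v v)" if v: "v \<in> carrier_vec n" "v \<noteq> 0\<^sub>v n" for v
  proof -
    have "v \<bullet> ((Y + \<tau> \<cdot>\<^sub>m 1\<^sub>m n) *\<^sub>v v) = v \<bullet> (Y *\<^sub>v v) + \<tau> * (v \<bullet> v)"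
      using Yc v
      by (simp add: add_mult_distrib_mat_vec[of _ n n] smult_mat_mult_mat_vec[of _ n n] scalar_prod_add_distrib[of _ n])
    then show ?thesis
      using nonneg v scalar_prod_self_pos[OF v] \<tau> by (simp add: add_nonneg_pos)
  qed
  ultimately show ?thesis using Yc unfolding pos_def_def by simp
qed

lemma pos_def_det_pos:
  assumes X: "pos_def n X"
  shows "0 < det X"
proof -
  have Xc: "X \<in> carrier_mat n n" "sym_mat X" using X unfolding pos_def_def by auto
  obtain rs where rs: "length rs = n" "char_poly X = (\<Prod>r\<leftarrow>rs. [:-r, 1:])"
    and ev: "\<forall>r\<in>set rs. \<exists>v\<in>carrier_vec n. v \<noteq> 0\<^sub>v n \<and> v \<bullet> (X *\<^sub>v v) = r * (v \<bullet> v)"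
    using sym_mat_eigenvalues[OF Xc] by blast
  have "0 < r" if r: "r \<in> set rs" for r
  proof -
    obtain v where v: "v \<in> carrier_vec n" "v \<noteq> 0\<^sub>v n" and eq: "v \<bullet> (X *\<^sub>v v) = r * (v \<bullet> v)"
      using ev r by blast
    have "0 < r * (v \<bullet> v)" using X v unfolding pos_def_def eq[symmetric] by blast
    with scalar_prod_self_pos[OF v] show ?thesis by (simp add: zero_less_mult_iff)
  qed
  then show ?thesis using det_eq_prod_list[OF Xc(1) rs(2,1)] by (simp add: prod_list_pos)
qed

lemma ln_det_le_tangent:
  fixes P Q G :: "real mat"
  assumes P: "pos_def n P" and Q: "pos_def n Q"
    and G: "G \<in> carrier_mat n n" and PG: "P * G = 1\<^sub>m n"
  shows "ln (det Q) \<le> ln (det P) + trace (G * Q) - n"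
proof -
  have Pc: "P \<in> carrier_mat n n" and Qc: "Q \<in> carrier_mat n n" and Q_sym: "sym_mat Q"
    using P Q unfolding pos_def_def by auto
  have GQ: "G * Q \<in> carrier_mat n n" using G Qc by simp
  obtain rs where len: "length rs = n" and cp: "char_poly (G * Q) = (\<Prod>r\<leftarrow>rs. [:-r, 1:])"
    and ev: "\<forall>r\<in>set rs. \<exists>v\<in>carrier_vec n. v \<noteq> 0\<^sub>v n \<and> v \<bullet> (Q *\<^sub>v v) = r * (v \<bullet> (P *\<^sub>v v))"
    using pencil_eigenvalues_real[OF P Qc Q_sym G PG] by blast
  have pos: "0 < r" if r: "r \<in> set rs" for r
  proof -
    obtain v where v: "v \<in> carrier_vec n" "v \<noteq> 0\<^sub>v n" and eq: "v \<bullet> (Q *\<^sub>v v) = r * (v \<bullet> (P *\<^sub>v v))"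
      using ev r by blast
    have "0 < r * (v \<bullet> (P *\<^sub>v v))" using Q v unfolding pos_def_def eq[symmetric] by blast
    moreover have "0 < v \<bullet> (P *\<^sub>v v)" using P v unfolding pos_def_def by blast
    ultimately show ?thesis by (simp add: zero_less_mult_iff)
  qed
  have "det P * det G = 1" using det_mult[OF Pc G] PG by simp
  then have "det (G * Q) = det Q / det P"
    using det_mult[OF G Qc] pos_def_det_pos[OF P] by (simp add: field_simps)
  then have "ln (det Q) - ln (det P) = ln (det (G * Q))"
    using pos_def_det_pos[OF P] pos_def_det_pos[OF Q] by (simp add: ln_div)
  also have "\<dots> = (\<Sum>r\<leftarrow>rs. ln r)"
    using pos ln_prod_list[of rs "\<lambda>r. r"] by (simp add: det_eq_prod_list[OF GQ cp len])
  also have "\<dots> \<le> (\<Sum>r\<leftarrow>rs. r - 1)"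
    using pos by (intro sum_list_mono ln_le_minus_one) auto
  also have "\<dots> = trace (G * Q) - n"
    using len by (simp add: trace_eq_sum[OF GQ cp] sum_list_subtractf sum_list_triv)
  finally show ?thesis by simp
qed

lemma psd_cone_convex_comb:
  assumes X: "X \<in> psd_cone n" and Y: "Y \<in> psd_cone n" and \<theta>: "0 \<le> \<theta>" "\<theta> \<le> 1"
  shows "\<theta> \<cdot>\<^sub>m X + (1 - \<theta>) \<cdot>\<^sub>m Y \<in> psd_cone n"
proof -
  have Xc: "X \<in> carrier_mat n n" "sym_mat X" and Yc: "Y \<in> carrier_mat n n" "sym_mat Y"
    using X Y unfolding psd_cone_def by auto
  have "sym_mat (\<theta> \<cdot>\<^sub>m X + (1 - \<theta>) \<cdot>\<^sub>m Y)"
    using Xc Yc unfolding sym_mat_def by (intro eq_matI) (auto, metis carrier_matD index_transpose_mat(1))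
  moreover have "0 \<le> v \<bullet> ((\<theta> \<cdot>\<^sub>m X + (1 - \<theta>) \<cdot>\<^sub>m Y) *\<^sub>v v)" if v: "v \<in> carrier_vec n" for v
  proof -
    have "v \<bullet> ((\<theta> \<cdot>\<^sub>m X + (1 - \<theta>) \<cdot>\<^sub>m Y) *\<^sub>v v) = \<theta> * (v \<bullet> (X *\<^sub>v v)) + (1 - \<theta>) * (v \<bullet> (Y *\<^sub>v v))"
      using Xc Yc v
      by (simp add: add_mult_distrib_mat_vec[of _ n n] smult_mat_mult_mat_vec[of _ n n]
          scalar_prod_add_distrib[of _ n])
    moreover have "0 \<le> v \<bullet> (X *\<^sub>v v)" "0 \<le> v \<bullet> (Y *\<^sub>v v)"
      using X Y v unfolding psd_cone_def by auto
    ultimately show ?thesis using \<theta> by simp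
  qed
  ultimately show ?thesis using Xc Yc unfolding psd_cone_def by auto
qed

lemma concave_on_psd_ln_det_shift:
  assumes \<tau>: "0 < \<tau>"
  shows "concave_on_psd n (\<lambda>Y. ereal (ln (det (Y + \<tau> \<cdot>\<^sub>m 1\<^sub>m n)) - c))"
  unfolding concave_on_psd_def
proof (intro ballI allI impI)
  fix X Y :: "real mat" and \<theta> a b :: real
  assume X: "X \<in> psd_cone n" and Y: "Y \<in> psd_cone n" and \<theta>: "0 \<le> \<theta>" "\<theta> \<le> 1"
    and a: "ereal a \<le> ereal (ln (det (X + \<tau> \<cdot>\<^sub>m 1\<^sub>m n)) - c)"
    and b: "ereal b \<le> ereal (ln (det (Y + \<tau> \<cdot>\<^sub>m 1\<^sub>m n)) - c)"
  define Z where "Z = \<theta> \<cdot>\<^sub>m X + (1 - \<theta>) \<cdot>\<^sub>m Y"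
  have Xc: "X \<in> carrier_mat n n" and Yc: "Y \<in> carrier_mat n n"
    using X Y unfolding psd_cone_def by auto
  have PZ: "pos_def n (Z + \<tau> \<cdot>\<^sub>m 1\<^sub>m n)"
    unfolding Z_def by (intro psd_cone_add_smult_one_pos_def psd_cone_convex_comb X Y \<theta> \<tau>)
  then obtain G where G: "G \<in> carrier_mat n n" and PG: "(Z + \<tau> \<cdot>\<^sub>m 1\<^sub>m n) * G = 1\<^sub>m n"
    using right_inverse_exists pos_def_det_pos unfolding pos_def_def by (metis less_irrefl)
  note tangent = ln_det_le_tangent[OF PZ psd_cone_add_smult_one_pos_def[OF _ \<tau>] G PG]
  have "\<theta> \<cdot>\<^sub>m (X + \<tau> \<cdot>\<^sub>m 1\<^sub>m n) + (1 - \<theta>) \<cdot>\<^sub>m (Y + \<tau> \<cdot>\<^sub>m 1\<^sub>m n) = Z + \<tau> \<cdot>\<^sub>m 1\<^sub>m n"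
    using Xc Yc unfolding Z_def by (intro eq_matI) (auto simp: algebra_simps)
  then have "\<theta> * trace (G * (X + \<tau> \<cdot>\<^sub>m 1\<^sub>m n)) + (1 - \<theta>) * trace (G * (Y + \<tau> \<cdot>\<^sub>m 1\<^sub>m n))
      = trace ((Z + \<tau> \<cdot>\<^sub>m 1\<^sub>m n) * G)"
    using G Xc Yc PZ unfolding pos_def_def
    by (metis add_carrier_mat one_carrier_mat smult_carrier_mat trace_mult_comm trace_mult_lincomb)
  also have "\<dots> = n" by (simp add: PG trace_def)
  finally have "\<theta> * ln (det (X + \<tau> \<cdot>\<^sub>m 1\<^sub>m n)) + (1 - \<theta>) * ln (det (Y + \<tau> \<cdot>\<^sub>m 1\<^sub>m n))
      \<le> ln (det (Z + \<tau> \<cdot>\<^sub>m 1\<^sub>m n))"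
    using mult_left_mono[OF tangent[OF X] \<theta>(1)] mult_left_mono[OF tangent[OF Y], of "1 - \<theta>"] \<theta>(2)
    by (simp add: algebra_simps)
  moreover have "\<theta> * a + (1 - \<theta>) * b
      \<le> \<theta> * (ln (det (X + \<tau> \<cdot>\<^sub>m 1\<^sub>m n)) - c) + (1 - \<theta>) * (ln (det (Y + \<tau> \<cdot>\<^sub>m 1\<^sub>m n)) - c)"
    using a b \<theta> by (intro add_mono mult_left_mono) auto
  ultimately show "ereal (\<theta> * a + (1 - \<theta>) * b) \<le> ereal (ln (det (Z + \<tau> \<cdot>\<^sub>m 1\<^sub>m n)) - c)"
    by (simp add: algebra_simps)
qed

section \<open>The envelope at Gram matrices\<close>

lemma sum_list_map_rev_sort:
  fixes f :: "'a :: linorder \<Rightarrow> 'b :: comm_monoid_add"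
  shows "(\<Sum>x\<leftarrow>rev (sort xs). f x) = (\<Sum>x\<leftarrow>xs. f x)"
proof -
  have "sum_mset (mset (map f (rev (sort xs)))) = sum_mset (mset (map f xs))" by simp
  then show ?thesis by (simp only: sum_mset_sum_list)
qed

lemma sum_nth_eq_sum_list: "(\<Sum>i<length xs. f (xs ! i)) = (\<Sum>x\<leftarrow>xs. f x)"
  by (simp add: sum_list_sum_nth atLeast0LessThan)

lemma eigs_desc_eq_rev_sort:
  assumes "char_poly X = (\<Prod>r\<leftarrow>rs. [:-r, 1:])"
  shows "eigs_desc X = rev (sort rs)"
proof -
  have "proots (\<Prod>r\<leftarrow>rs. [:-r, 1:]) = mset rs"
  proof (induction rs)
    case (Cons a rs)
    have "proots ([:-a, 1:] * (\<Prod>r\<leftarrow>rs. [:-r, 1:])) = proots [:-a, 1:] + proots (\<Prod>r\<leftarrow>rs. [:-r, 1:])"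
      by (rule proots_mult) (auto simp: prod_list_zero_iff)
    with Cons show ?case by simp
  qed simp
  then show ?thesis unfolding eigs_desc_def assms by (simp add: sorted_list_of_multiset_mset)
qed

lemma Phi_eq_eigs_desc:
  "Phi s t X = (if \<forall>i<s. 0 < eigs_desc X ! i + t
                then ereal (\<Sum>i<s. ln (eigs_desc X ! i + t)) else -\<infinity>)"
proof -
  have "{1..s} = Suc ` {..<s}" by (simp add: image_Suc_lessThan)
  then show ?thesis unfolding Phi_def eig_def by (simp add: sum.reindex)
qed

lemma Phi_le_ln_det_shift:
  assumes Y: "Y \<in> psd_cone n" and sn: "s \<le> n" and t\<tau>: "t \<le> \<tau>" and \<tau>: "0 < \<tau>"
  shows "Phi s t Y \<le> ereal (ln (det (Y + \<tau> \<cdot>\<^sub>m 1\<^sub>m n)) - real (n - s) * ln \<tau>)"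
proof -
  have Yc: "Y \<in> carrier_mat n n" using Y unfolding psd_cone_def by auto
  obtain rs where len: "length rs = n" and cp: "char_poly Y = (\<Prod>r\<leftarrow>rs. [:-r, 1:])"
    and nonneg: "\<forall>r\<in>set rs. 0 \<le> r"
    using psd_cone_eigenvalues_nonneg[OF Y] by blast
  define L where "L = rev (sort rs)"
  have L: "eigs_desc Y = L" "length L = n" "set L = set rs"
    unfolding L_def using eigs_desc_eq_rev_sort[OF cp] len by auto
  have L_nonneg: "0 \<le> L ! i" if "i < n" for i using nonneg L that by (metis nth_mem)
  show ?thesis
  proof (cases "\<forall>i<s. 0 < L ! i + t")
    case True
    have "(\<Sum>i<s. ln (L ! i + t)) \<le> (\<Sum>i<s. ln (L ! i + \<tau>))"
    proof (rule sum_mono)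
      fix i assume "i \<in> {..<s}"
      then have "0 < L ! i + t" using True by simp
      then show "ln (L ! i + t) \<le> ln (L ! i + \<tau>)" using t\<tau> by simp
    qed
    moreover have "(\<Sum>i<n. ln (L ! i + \<tau>)) = (\<Sum>i<s. ln (L ! i + \<tau>)) + (\<Sum>i\<in>{s..<n}. ln (L ! i + \<tau>))"
      using sn by (simp add: lessThan_atLeast0 sum.atLeastLessThan_concat)
    moreover have "(\<Sum>i\<in>{s..<n}. ln \<tau>) \<le> (\<Sum>i\<in>{s..<n}. ln (L ! i + \<tau>))"
    proof (rule sum_mono)
      fix i assume "i \<in> {s..<n}"
      then have "0 \<le> L ! i" using L_nonneg by simp
      then show "ln \<tau> \<le> ln (L ! i + \<tau>)" using \<tau> by simp
    qed
    moreover have "(\<Sum>i<n. ln (L ! i + \<tau>)) = (\<Sum>r\<leftarrow>rs. ln (r + \<tau>))"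
      using sum_nth_eq_sum_list[where xs = L and f = "\<lambda>r. ln (r + \<tau>)"] L(2)
        sum_list_map_rev_sort[where f = "\<lambda>r. ln (r + \<tau>)"] by (simp add: L_def)
    moreover have "(\<Sum>r\<leftarrow>rs. ln (r + \<tau>)) = ln (det (Y + \<tau> \<cdot>\<^sub>m 1\<^sub>m n))"
      using nonneg \<tau> ln_prod_list[of rs "\<lambda>r. r + \<tau>"]
      by (simp add: det_add_smult_one_eq_prod[OF Yc cp len] add_nonneg_pos)
    ultimately have "(\<Sum>i<s. ln (L ! i + t)) \<le> ln (det (Y + \<tau> \<cdot>\<^sub>m 1\<^sub>m n)) - real (n - s) * ln \<tau>"
      by simp
    then show ?thesis using True sn by (simp add: Phi_eq_eigs_desc L)
  qed (auto simp: Phi_eq_eigs_desc L)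
qed

lemma gram_mem_psd_cone:
  fixes B :: "real mat"
  assumes B: "B \<in> carrier_mat n m"
  shows "B * transpose_mat B \<in> psd_cone n"
proof -
  have Bt: "transpose_mat B \<in> carrier_mat m n" using B by simp
  have "sym_mat (B * transpose_mat B)"
    unfolding sym_mat_def using transpose_mult[OF B Bt] by simp
  moreover have "0 \<le> v \<bullet> ((B * transpose_mat B) *\<^sub>v v)" if v: "v \<in> carrier_vec n" for v
  proof -
    have w: "transpose_mat B *\<^sub>v v \<in> carrier_vec m" using Bt v by simp
    have "v \<bullet> ((B * transpose_mat B) *\<^sub>v v) = (transpose_mat B *\<^sub>v v) \<bullet> (transpose_mat B *\<^sub>v v)"
      using assoc_mult_mat_vec[OF B Bt v] transpose_vec_mult_scalar[OF B w v] by simp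
    also have "\<dots> \<ge> 0" unfolding scalar_prod_def by (auto intro!: sum_nonneg)
    finally show ?thesis .
  qed
  ultimately show ?thesis using B unfolding psd_cone_def by simp
qed

lemma eigs_desc_gram:
  fixes B :: "real mat"
  assumes B: "B \<in> carrier_mat n s" and sn: "s \<le> n"
    and cp: "char_poly (transpose_mat B * B) = (\<Prod>r\<leftarrow>rs. [:-r, 1:])" and nonneg: "\<forall>r\<in>set rs. 0 \<le> r"
  shows "eigs_desc (B * transpose_mat B) = rev (sort rs) @ replicate (n - s) 0"
proof -
  have "char_poly (B * transpose_mat B) = (\<Prod>r\<leftarrow>replicate (n - s) 0 @ rs. [:-r, 1:])"
    using char_poly_mult_swap[OF B _ sn, of "transpose_mat B"] B cp by (simp add: prod_list_replicate)
  then have "eigs_desc (B * transpose_mat B) = rev (sort (replicate (n - s) 0 @ rs))"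
    by (rule eigs_desc_eq_rev_sort)
  also have "sort (replicate (n - s) 0 @ rs) = replicate (n - s) 0 @ sort rs"
    using nonneg by (intro properties_for_sort) (auto simp: sorted_append)
  finally show ?thesis by simp
qed

lemma Phi_gram:
  fixes B :: "real mat"
  assumes B: "B \<in> carrier_mat n s" and sn: "s \<le> n"
    and pd: "pos_def s (transpose_mat B * B + t \<cdot>\<^sub>m 1\<^sub>m s)"
  shows "Phi s t (B * transpose_mat B) = ereal (ln (det (transpose_mat B * B + t \<cdot>\<^sub>m 1\<^sub>m s)))"
proof -
  define K where "K = transpose_mat B * B"
  have K: "K \<in> psd_cone s" unfolding K_def using gram_mem_psd_cone[of "transpose_mat B" s n] B by simp
  then have Kc: "K \<in> carrier_mat s s" "sym_mat K" unfolding psd_cone_def by auto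
  obtain rs where len: "length rs = s" and cp: "char_poly K = (\<Prod>r\<leftarrow>rs. [:-r, 1:])"
    and ev: "\<forall>r\<in>set rs. \<exists>v\<in>carrier_vec s. v \<noteq> 0\<^sub>v s \<and> v \<bullet> (K *\<^sub>v v) = r * (v \<bullet> v)"
    using sym_mat_eigenvalues[OF Kc] by blast
  have rs: "0 \<le> r \<and> 0 < r + t" if r: "r \<in> set rs" for r
  proof -
    obtain v where v: "v \<in> carrier_vec s" "v \<noteq> 0\<^sub>v s" and eq: "v \<bullet> (K *\<^sub>v v) = r * (v \<bullet> v)"
      using ev r by blast
    have "0 \<le> r * (v \<bullet> v)" using K v unfolding psd_cone_def eq[symmetric] by blast
    moreover have "v \<bullet> ((K + t \<cdot>\<^sub>m 1\<^sub>m s) *\<^sub>v v) = (r + t) * (v \<bullet> v)"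
      using Kc v eq
      by (simp add: add_mult_distrib_mat_vec[of _ s s] smult_mat_mult_mat_vec[of _ s s]
          scalar_prod_add_distrib[of _ s] algebra_simps)
    then have "0 < (r + t) * (v \<bullet> v)" using pd v unfolding pos_def_def K_def by metis
    ultimately show ?thesis using scalar_prod_self_pos[OF v] by (simp add: zero_le_mult_iff zero_less_mult_iff)
  qed
  define L where "L = rev (sort rs)"
  have L: "length L = s" "set L = set rs" unfolding L_def using len by auto
  have eigs: "eigs_desc (B * transpose_mat B) ! i = L ! i" if "i < s" for i
    using eigs_desc_gram[OF B sn cp[unfolded K_def]] rs that L by (simp add: nth_append L_def)
  have "\<forall>i<s. 0 < eigs_desc (B * transpose_mat B) ! i + t"
    using eigs rs L by (metis nth_mem)
  then have "Phi s t (B * transpose_mat B) = ereal (\<Sum>i<s. ln (L ! i + t))"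
    by (simp add: Phi_eq_eigs_desc eigs)
  also have "(\<Sum>i<s. ln (L ! i + t)) = (\<Sum>r\<leftarrow>rs. ln (r + t))"
    using sum_nth_eq_sum_list[where xs = L and f = "\<lambda>r. ln (r + t)"] L(1)
      sum_list_map_rev_sort[where f = "\<lambda>r. ln (r + t)"] by (simp add: L_def)
  also have "\<dots> = ln (det (K + t \<cdot>\<^sub>m 1\<^sub>m s))"
    using rs ln_prod_list[of rs "\<lambda>r. r + t"] by (simp add: det_add_smult_one_eq_prod[OF Kc(1) cp len])
  finally show ?thesis unfolding K_def .
qed

lemma Phi_le_Phi_hat:
  assumes "X \<in> psd_cone n"
  shows "Phi s t X \<le> Phi_hat n s t X"
  using assms unfolding Phi_hat_def by (auto intro: Inf_greatest)

lemma Phi_hat_le_concave_majorant: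
  assumes "concave_on_psd n g" and "\<forall>Y\<in>psd_cone n. Phi s t Y \<le> g Y"
  shows "Phi_hat n s t X \<le> g X"
  using assms unfolding Phi_hat_def by (auto intro: Inf_lower)

lemma Phi_hat_gram_le:
  fixes B :: "real mat"
  assumes B: "B \<in> carrier_mat n s" and sn: "s \<le> n" and t\<tau>: "t \<le> \<tau>" and \<tau>: "0 < \<tau>"
  shows "Phi_hat n s t (B * transpose_mat B) \<le> ereal (ln (det (transpose_mat B * B + \<tau> \<cdot>\<^sub>m 1\<^sub>m s)))"
proof -
  have Bt: "transpose_mat B \<in> carrier_mat s n" using B by simp
  have "Phi_hat n s t (B * transpose_mat B)
      \<le> ereal (ln (det (B * transpose_mat B + \<tau> \<cdot>\<^sub>m 1\<^sub>m n)) - real (n - s) * ln \<tau>)"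
    by (intro Phi_hat_le_concave_majorant concave_on_psd_ln_det_shift[OF \<tau>] ballI
        Phi_le_ln_det_shift[OF _ sn t\<tau> \<tau>])
  also have "det (B * transpose_mat B + \<tau> \<cdot>\<^sub>m 1\<^sub>m n)
      = \<tau> ^ (n - s) * det (transpose_mat B * B + \<tau> \<cdot>\<^sub>m 1\<^sub>m s)"
    using sylvester_det[OF B Bt _ sn] \<tau> B by (simp add: comm_add_mat[of _ n n] comm_add_mat[of _ s s])
  also have "ln (\<tau> ^ (n - s) * det (transpose_mat B * B + \<tau> \<cdot>\<^sub>m 1\<^sub>m s))
      = real (n - s) * ln \<tau> + ln (det (transpose_mat B * B + \<tau> \<cdot>\<^sub>m 1\<^sub>m s))"
    using \<tau> pos_def_det_pos[OF psd_cone_add_smult_one_pos_def[OF gram_mem_psd_cone[OF Bt] \<tau>]]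
    by (simp add: ln_mult_pos ln_realpow)
  finally show ?thesis by simp
qed

lemma Phi_hat_gram:
  fixes B :: "real mat"
  assumes B: "B \<in> carrier_mat n s" and sn: "s \<le> n" and t: "0 \<le> t"
    and pd: "pos_def s (transpose_mat B * B + t \<cdot>\<^sub>m 1\<^sub>m s)"
  shows "Phi_hat n s t (B * transpose_mat B) = ereal (ln (det (transpose_mat B * B + t \<cdot>\<^sub>m 1\<^sub>m s)))"
proof (rule antisym)
  define f where "f \<tau> = ln (det (transpose_mat B * B + \<tau> \<cdot>\<^sub>m 1\<^sub>m s))" for \<tau>
  have K: "transpose_mat B * B \<in> carrier_mat s s" using B by simp
  have lim: "(f \<longlongrightarrow> f t) (at_right t)"
    using pos_def_det_pos[OF pd] unfolding f_def det_add_smult_one_eq_poly[OF K]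
    by (intro tendsto_intros) auto
  have upper: "\<forall>\<^sub>F \<tau> in at_right t. Phi_hat n s t (B * transpose_mat B) \<le> ereal (f \<tau>)"
    using eventually_at_right_less[of t] unfolding f_def
    by eventually_elim (use Phi_hat_gram_le[OF B sn] t in auto)
  show "Phi_hat n s t (B * transpose_mat B) \<le> ereal (f t)"
    by (rule tendsto_lowerbound[OF tendsto_ereal[OF lim] upper trivial_limit_at_right_real])
  show "ereal (f t) \<le> Phi_hat n s t (B * transpose_mat B)"
    using Phi_le_Phi_hat[OF gram_mem_psd_cone[OF B], of s t] unfolding Phi_gram[OF B sn pd] f_def .
qed

section \<open>Principal submatrices and binary vectors\<close>

lemma pick_bij_betw:
  assumes "finite S"
  shows "bij_betw (pick S) {..<card S} S"
proof (rule bij_betw_imageI)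
  show "inj_on (pick S) {..<card S}"
    by (rule strict_mono_on_imp_inj_on) (auto simp: strict_mono_on_def pick_mono)
  have "j \<in> pick S ` {..<card S}" if j: "j \<in> S" for j
  proof
    show "j = pick S (card {a\<in>S. a < j})" using pick_card_in_set[OF j] by simp
    have "{a\<in>S. a < j} \<subset> S" using j by auto
    then show "card {a\<in>S. a < j} \<in> {..<card S}" using assms by (simp add: psubset_card_mono)
  qed
  moreover have "pick S l \<in> S" if "l < card S" for l using that by (simp add: pick_in_set)
  ultimately show "pick S ` {..<card S} = S" by auto
qed

text \<open>\<open>pick S l\<close> is the \<open>l\<close>-th smallest element of \<open>S\<close> (counting from 0), so the columns of
  \<open>selection_mat n S\<close> are the unit vectors \<open>e\<^sub>i\<close>, \<open>i \<in> S\<close>, in increasing order of \<open>i\<close>.\<close>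

definition selection_mat :: "nat \<Rightarrow> nat set \<Rightarrow> 'a :: zero_neq_one mat" where
  "selection_mat n S = mat n (card S) (\<lambda>(j, l). if j = pick S l then 1 else 0)"

lemma dim_selection_mat [simp]:
  "dim_row (selection_mat n S) = n" "dim_col (selection_mat n S) = card S"
  by (simp_all add: selection_mat_def)

lemma selection_mat_carrier [simp]: "selection_mat n S \<in> carrier_mat n (card S)"
  by (rule carrier_matI) simp_all

lemma index_mult_selection_mat:
  fixes X :: "'a :: comm_ring_1 mat"
  assumes X: "X \<in> carrier_mat m n" and S: "S \<subseteq> {..<n}" and i: "i < m" and l: "l < card S"
  shows "(X * selection_mat n S) $$ (i, l) = X $$ (i, pick S l)"
proof -
  have "pick S l \<in> S" using l by (simp add: pick_in_set)
  then have "pick S l < n" using S by auto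
  then show ?thesis
    using X i l by (simp add: selection_mat_def scalar_prod_def if_distrib[of "\<lambda>x. _ * x"] cong: if_cong)
qed

lemma submatrix_carrier_mat:
  assumes "X \<in> carrier_mat n n" and "S \<subseteq> {..<n}"
  shows "submatrix X S S \<in> carrier_mat (card S) (card S)"
proof -
  have "{j. j < n \<and> j \<in> S} = S" using assms(2) by auto
  then show ?thesis using assms(1) by (intro carrier_matI) (simp_all add: dim_submatrix)
qed

lemma submatrix_eq_congruence:
  fixes X :: "'a :: comm_ring_1 mat"
  assumes X: "X \<in> carrier_mat n n" and S: "S \<subseteq> {..<n}"
  shows "submatrix X S S = transpose_mat (selection_mat n S) * X * selection_mat n S"
proof -
  let ?E = "selection_mat n S :: 'a mat"
  have "{j. j < n \<and> j \<in> S} = S" using S by auto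
  then have card: "card {j. j < n \<and> j \<in> S} = card S" by simp
  show ?thesis
  proof (rule eq_matI)
    fix l m assume "l < dim_row (transpose_mat ?E * X * ?E)" "m < dim_col (transpose_mat ?E * X * ?E)"
    then have l: "l < card S" and m: "m < card S" by auto
    have "pick S l \<in> S" using l by (simp add: pick_in_set)
    then have p: "pick S l < n" using S by auto
    have "transpose_mat ?E * X * ?E = transpose_mat ?E * (X * ?E)"
      using X by (simp add: assoc_mult_mat[of _ "card S" n _ n _ "card S"])
    also have "\<dots> = transpose_mat (transpose_mat (X * ?E) * ?E)"
      using X by (subst transpose_mult[of _ "card S" n _ "card S"]) auto
    finally have "(transpose_mat ?E * X * ?E) $$ (l, m) = (transpose_mat (X * ?E) * ?E) $$ (m, l)"
      using X l m by simp
    also have "\<dots> = transpose_mat (X * ?E) $$ (m, pick S l)"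
      using X S l m by (intro index_mult_selection_mat[of _ "card S" n]) auto
    also have "\<dots> = (X * ?E) $$ (pick S l, m)"
      using X m p by simp
    also have "\<dots> = X $$ (pick S l, pick S m)"
      by (rule index_mult_selection_mat[OF X S p m])
    finally show "submatrix X S S $$ (l, m) = (transpose_mat ?E * X * ?E) $$ (l, m)"
      using X l m card by (simp add: submatrix_index)
  qed (use X card in \<open>simp_all add: dim_submatrix\<close>)
qed

lemma transpose_selection_mat_mult_selection_mat:
  assumes S: "S \<subseteq> {..<n}"
  shows "transpose_mat (selection_mat n S) * selection_mat n S = (1\<^sub>m (card S) :: 'a :: comm_ring_1 mat)"
proof -
  have "transpose_mat (selection_mat n S) * selection_mat n S = (submatrix (1\<^sub>m n) S S :: 'a mat)"
    using submatrix_eq_congruence[OF one_carrier_mat S, where 'a = 'a] by simp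
  also have "\<dots> = 1\<^sub>m (card S)"
  proof -
    have "{j. j < n \<and> j \<in> S} = S" using S by auto
    then have card: "card {j. j < n \<and> j \<in> S} = card S" by simp
    have "inj_on (pick S) {..<card S}"
      using pick_bij_betw[OF finite_subset[OF S finite_lessThan]] by (rule bij_betw_imp_inj_on)
    moreover have "pick S l < n" if "l < card S" for l using S that pick_in_set[of l S] by auto
    ultimately show ?thesis
      using card by (intro eq_matI) (auto simp: submatrix_index dim_submatrix inj_on_def)
  qed
  finally show ?thesis .
qed

lemma pos_def_congruence:
  fixes C E :: "real mat"
  assumes C: "pos_def n C" and E: "E \<in> carrier_mat n m" and EE: "transpose_mat E * E = 1\<^sub>m m"
  shows "pos_def m (transpose_mat E * C * E)"
proof -
  have Cc: "C \<in> carrier_mat n n" and C_sym: "sym_mat C" using C unfolding pos_def_def by auto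
  have Et: "transpose_mat E \<in> carrier_mat m n" using E by simp
  have "sym_mat (transpose_mat E * C * E)"
    using Cc C_sym E unfolding sym_mat_def
    by (simp add: transpose_mult[of _ m n _ m] transpose_mult[of _ n n _ m] assoc_mult_mat[of _ m n _ n _ m])
  moreover have "0 < v \<bullet> ((transpose_mat E * C * E) *\<^sub>v v)" if v: "v \<in> carrier_vec m" "v \<noteq> 0\<^sub>v m" for v
  proof -
    have Ev: "E *\<^sub>v v \<in> carrier_vec n" using E v by simp
    have "E *\<^sub>v v \<noteq> 0\<^sub>v n"
    proof
      assume "E *\<^sub>v v = 0\<^sub>v n"
      then have "transpose_mat E *\<^sub>v (E *\<^sub>v v) = 0\<^sub>v m"
        using Et by (intro eq_vecI) (auto simp: row_def)
      then have "(transpose_mat E * E) *\<^sub>v v = 0\<^sub>v m"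
        using E Et v by (simp add: assoc_mult_mat_vec[of _ m n _ m])
      with v show False by (simp add: EE)
    qed
    then have "0 < (E *\<^sub>v v) \<bullet> (C *\<^sub>v (E *\<^sub>v v))" using C Ev unfolding pos_def_def by blast
    also have "\<dots> = (C *\<^sub>v (E *\<^sub>v v)) \<bullet> (E *\<^sub>v v)"
      using Cc Ev by (simp add: comm_scalar_prod[of _ n])
    also have "\<dots> = (transpose_mat E *\<^sub>v (C *\<^sub>v (E *\<^sub>v v))) \<bullet> v"
      using Cc Ev by (simp add: transpose_vec_mult_scalar[OF E v(1)])
    also have "\<dots> = v \<bullet> ((transpose_mat E * C * E) *\<^sub>v v)"
      using E Et Cc v
      by (simp add: comm_scalar_prod[of _ m] assoc_mult_mat_vec[of _ m n _ m] assoc_mult_mat_vec[of _ m n _ n])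
    finally show ?thesis .
  qed
  ultimately show ?thesis using Cc E unfolding pos_def_def by auto
qed

lemma pos_def_submatrix:
  assumes C: "pos_def n C" and S: "S \<subseteq> {..<n}"
  shows "pos_def (card S) (submatrix C S S)"
proof -
  have "C \<in> carrier_mat n n" using C unfolding pos_def_def by simp
  then show ?thesis
    using pos_def_congruence[OF C selection_mat_carrier transpose_selection_mat_mult_selection_mat[OF S]]
    by (simp add: submatrix_eq_congruence[OF _ S])
qed

lemma cholesky_factor_gram_submatrix:
  assumes C: "C \<in> carrier_mat n n" and A: "cholesky_factor n C t A" and S: "S \<subseteq> {..<n}"
  shows "transpose_mat (A * selection_mat n S) * (A * selection_mat n S) + t \<cdot>\<^sub>m 1\<^sub>m (card S)
    = submatrix C S S"
proof -
  let ?E = "selection_mat n S :: real mat"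
  let ?Et = "transpose_mat ?E"
  have Ac: "A \<in> carrier_mat n n" and AtA: "transpose_mat A * A = C - t \<cdot>\<^sub>m 1\<^sub>m n"
    using A unfolding cholesky_factor_def by auto
  have E: "?E \<in> carrier_mat n (card S)" and Et: "?Et \<in> carrier_mat (card S) n" by simp_all
  have "transpose_mat (A * ?E) * (A * ?E) = ?Et * (transpose_mat A * A) * ?E"
    using Ac by (simp add: transpose_mult[OF Ac E] assoc_mult_mat[of _ _ n _ n _ "card S"]
        assoc_mult_mat[of _ "card S" n _ n _ "card S"])
  also have "?Et * (transpose_mat A * A) = ?Et * C - t \<cdot>\<^sub>m ?Et"
    unfolding AtA using C
    by (simp add: mult_minus_distrib_mat[OF Et] mult_smult_distrib[OF Et one_carrier_mat] right_mult_one_mat[OF Et])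
  also have "(?Et * C - t \<cdot>\<^sub>m ?Et) * ?E = ?Et * C * ?E - (t \<cdot>\<^sub>m ?Et) * ?E"
    by (rule minus_mult_distrib_mat[OF _ _ E]) (use C in auto)
  also have "(t \<cdot>\<^sub>m ?Et) * ?E = t \<cdot>\<^sub>m 1\<^sub>m (card S)"
    using mult_smult_assoc_mat[OF Et E] transpose_selection_mat_mult_selection_mat[OF S, where 'a = real]
    by simp
  also have "?Et * C * ?E = submatrix C S S"
    by (rule submatrix_eq_congruence[OF C S, symmetric])
  finally show ?thesis
    using submatrix_carrier_mat[OF C S] by (intro eq_matI) auto
qed

lemma M_mat_indicator:
  fixes A :: "real mat"
  assumes A: "A \<in> carrier_mat n n" and S: "S \<subseteq> {..<n}"
  shows "M_mat n A (vec n (\<lambda>i. of_bool (i \<in> S)))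
    = (A * selection_mat n S) * transpose_mat (A * selection_mat n S)"
proof -
  define B where "B = A * selection_mat n S"
  have B: "B \<in> carrier_mat n (card S)" using A unfolding B_def by simp
  have B_index: "B $$ (i, l) = A $$ (i, pick S l)" if "i < n" "l < card S" for i l
    unfolding B_def by (rule index_mult_selection_mat[OF A S that])
  have fin: "finite S" using S finite_subset by blast
  have "M_mat n A (vec n (\<lambda>i. of_bool (i \<in> S))) = B * transpose_mat B"
  proof (rule eq_matI)
    fix j k assume "j < dim_row (B * transpose_mat B)" "k < dim_col (B * transpose_mat B)"
    then have j: "j < n" and k: "k < n" using B by auto
    have "M_mat n A (vec n (\<lambda>i. of_bool (i \<in> S))) $$ (j, k) = (\<Sum>i\<in>S. A $$ (j, i) * A $$ (k, i))"
      using j k S by (simp add: M_mat_def sum.inter_restrict[symmetric] Int_absorb1)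
    also have "\<dots> = (\<Sum>l<card S. A $$ (j, pick S l) * A $$ (k, pick S l))"
      by (rule sum.reindex_bij_betw[OF pick_bij_betw[OF fin], symmetric])
    also have "\<dots> = (B * transpose_mat B) $$ (j, k)"
      using B j k by (auto simp: scalar_prod_def B_index atLeast0LessThan intro!: sum.cong)
    finally show "M_mat n A (vec n (\<lambda>i. of_bool (i \<in> S))) $$ (j, k) = (B * transpose_mat B) $$ (j, k)" .
  qed (use B in \<open>auto simp: M_mat_def\<close>)
  then show ?thesis unfolding B_def .
qed

lemma Phi_hat_M_mat_indicator:
  assumes C: "pos_def n C" and A: "cholesky_factor n C t A" and t: "0 \<le> t" and S: "S \<subseteq> {..<n}"
  shows "Phi_hat n (card S) t (M_mat n A (vec n (\<lambda>i. of_bool (i \<in> S))))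
    = ereal (ln (det (submatrix C S S)))"
proof -
  have Cc: "C \<in> carrier_mat n n" using C unfolding pos_def_def by simp
  have Ac: "A \<in> carrier_mat n n" using A unfolding cholesky_factor_def by simp
  have "card S \<le> n" using card_mono[OF _ S] by simp
  then show ?thesis
    using Phi_hat_gram[of "A * selection_mat n S" n "card S" t] Ac t
      cholesky_factor_gram_submatrix[OF Cc A S] pos_def_submatrix[OF C S]
    by (simp add: M_mat_indicator[OF Ac S])
qed

lemma binary_vecs_eq_indicator_vecs:
  "{x \<in> carrier_vec n. (\<forall>i<n. x $ i \<in> {0, 1}) \<and> (\<Sum>i<n. x $ i) = real s}
    = (\<lambda>S. vec n (\<lambda>i. of_bool (i \<in> S))) ` {S. S \<subseteq> {..<n} \<and> card S = s}"
proof (intro equalityI subsetI)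
  fix x :: "real vec"
  assume "x \<in> {x \<in> carrier_vec n. (\<forall>i<n. x $ i \<in> {0, 1}) \<and> (\<Sum>i<n. x $ i) = real s}"
  then have x: "x \<in> carrier_vec n" and bin: "\<forall>i<n. x $ i \<in> {0, 1}" and sum: "(\<Sum>i<n. x $ i) = real s"
    by auto
  define S where "S = {i. i < n \<and> x $ i = 1}"
  have x_eq: "x = vec n (\<lambda>i. of_bool (i \<in> S))"
    using x bin unfolding S_def by (intro eq_vecI) auto
  have "(\<Sum>i<n. x $ i) = real (card S)"
    by (subst x_eq) (simp add: sum_of_bool_eq S_def Collect_conj_eq lessThan_def)
  then have "card S = s" using sum by simp
  then show "x \<in> (\<lambda>S. vec n (\<lambda>i. of_bool (i \<in> S))) ` {S. S \<subseteq> {..<n} \<and> card S = s}"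
    using x_eq unfolding S_def by blast
next
  fix x :: "real vec"
  assume "x \<in> (\<lambda>S. vec n (\<lambda>i. of_bool (i \<in> S))) ` {S. S \<subseteq> {..<n} \<and> card S = s}"
  then obtain S where S: "S \<subseteq> {..<n}" "card S = s" and x: "x = vec n (\<lambda>i. of_bool (i \<in> S))"
    by blast
  have "(\<Sum>i<n. x $ i) = real (card S)"
    using S(1) by (simp add: x sum_of_bool_eq Int_absorb1)
  then show "x \<in> {x \<in> carrier_vec n. (\<forall>i<n. x $ i \<in> {0, 1}) \<and> (\<Sum>i<n. x $ i) = real s}"
    using S x by auto
qed

lemma Phi_hat_M_mat_binary_image:
  assumes C: "pos_def n C" and A: "cholesky_factor n C t A" and t: "0 \<le> t"
  shows "{Phi_hat n s t (M_mat n A x) | x. x \<in> carrier_vec n \<and> (\<forall>i<n. x $ i \<in> {0, 1})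
            \<and> (\<Sum>i<n. x $ i) = real s}
    = (\<lambda>S. ereal (ln (det (submatrix C S S)))) ` {S. S \<subseteq> {..<n} \<and> card S = s}"
proof -
  have "{Phi_hat n s t (M_mat n A x) | x. x \<in> carrier_vec n \<and> (\<forall>i<n. x $ i \<in> {0, 1})
            \<and> (\<Sum>i<n. x $ i) = real s}
      = (\<lambda>x. Phi_hat n s t (M_mat n A x))
          ` {x \<in> carrier_vec n. (\<forall>i<n. x $ i \<in> {0, 1}) \<and> (\<Sum>i<n. x $ i) = real s}"
    by blast
  also have "\<dots> = (\<lambda>S. Phi_hat n s t (M_mat n A (vec n (\<lambda>i. of_bool (i \<in> S)))))
                    ` {S. S \<subseteq> {..<n} \<and> card S = s}"
    unfolding binary_vecs_eq_indicator_vecs image_image ..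
  also have "\<dots> = (\<lambda>S. ereal (ln (det (submatrix C S S)))) ` {S. S \<subseteq> {..<n} \<and> card S = s}"
    using Phi_hat_M_mat_indicator[OF C A t] by (intro image_cong) auto
  finally show ?thesis .
qed

theorem corollary1:
  fixes n s :: nat and C A :: "real mat" and t :: real
  assumes "1 \<le> n" and "1 \<le> s" and "s \<le> n"
    and "pos_def n C"
    and "0 \<le> t" and "t \<le> lambda_min C"
    and "cholesky_factor n C t A"
  shows "ereal (Max {ln (det (submatrix C S S)) | S. S \<subseteq> {..<n} \<and> card S = s})
       = Max {Phi_hat n s t (M_mat n A x) | x. x \<in> carrier_vec n \<and> (\<forall>i<n. x $ i \<in> {0, 1})
                \<and> (\<Sum>i<n. x $ i) = real s}"
proof -
  define T where "T = {S. S \<subseteq> {..<n} \<and> card S = s}"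
  define h where "h S = ln (det (submatrix C S S))" for S
  have "finite T" unfolding T_def by (rule finite_subset[of _ "Pow {..<n}"]) auto
  moreover have "{..<s} \<in> T" using assms(3) unfolding T_def by auto
  moreover have "{ln (det (submatrix C S S)) | S. S \<subseteq> {..<n} \<and> card S = s} = h ` T"
    unfolding T_def h_def by blast
  moreover have "{Phi_hat n s t (M_mat n A x) | x. x \<in> carrier_vec n \<and> (\<forall>i<n. x $ i \<in> {0, 1})
                   \<and> (\<Sum>i<n. x $ i) = real s} = ereal ` h ` T"
    unfolding Phi_hat_M_mat_binary_image[OF assms(4,7,5)] T_def h_def image_image ..
  ultimately show ?thesis using mono_Max_commute[of ereal "h ` T"] by (auto simp: mono_def)
qed

end
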